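(* Let $(\alpha_n)_{n\in\mathbb N}$, $(\beta_n)_{n\in\mathbb N}$ be arcs in $\mathbb R^2$ such that: (i) for some $R$, $\alpha_n,\beta_n\subset B_R(0)$ and $\alpha_n\cap\beta_n=\emptyset$ for all $n$; (ii) $\alpha_n\to\mathcal L_1$ and $\beta_n\to\mathcal L_2$ in the Hausdorff metric; (iii) $\alpha_n(0),\beta_n(0)\to x_0$ and $\alpha_n(1),\beta_n(1)\to x_1$ with $x_0\neq x_1$. Then either $[\mathcal L_1\cap\mathcal L_2]_{x_0}=[\mathcal L_1\cap\mathcal L_2]_{x_1}$, or $\partial(\mathcal L_1\cup\mathcal L_2)$ separates $\mathbb R^2$.
   Context: An arc is an injective continuous map $[0,1]\to\mathbb R^2$, identified with its image. For $X\subset\mathbb R^2$ and $y\in X$, $[X]_y$ is the connected component of $X$ containing $y$. A set separates $\mathbb R^2$ if its complement is disconnected. *)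

theory Defs
  imports "HOL-Analysis.Analysis"
begin

text \<open>Hausdorff distance between nonempty bounded sets (as in HOL Light's hausdist);
  on nonempty compact sets this is the Hausdorff metric.  \<close>
definition hausdist :: "'a::metric_space set \<Rightarrow> 'a set \<Rightarrow> real" where
  "hausdist S T =
     (if S \<noteq> {} \<and> T \<noteq> {} \<and> bounded S \<and> bounded T
      then max (SUP x\<in>S. infdist x T) (SUP y\<in>T. infdist y S) else 0)"

end

theory Submission
  imports Defs
begin

(* Hausdorff limits of compact connected sets are connected, and a
   limit of points of the approximating sets lies in the limit set.  Hence L1 and
   L2 are continua that both contain x0 and x1.  If L1 \<inter> L2 is connected, then it
   is the common component of x0 and x1.  Otherwise Janiszewski's theorem (for two
   plane continua with connected union complement, the intersection is connected)
   shows that the complement of L1 \<union> L2 is disconnected, and a disconnected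
   complement of a closed set K forces the complement of its frontier to be
   disconnected, too. *)

lemma hausdist_sym: "hausdist S T = hausdist T S"
  by (auto simp: hausdist_def max.commute)

lemma infdist_le_hausdist:
  fixes S T :: "'a::metric_space set"
  assumes "bounded S" "bounded T" "T \<noteq> {}" "x \<in> S"
  shows "infdist x T \<le> hausdist S T"
proof -
  obtain t where "t \<in> T" using assms(3) by blast
  obtain e where e: "\<And>y. y \<in> S \<Longrightarrow> dist t y \<le> e"
    using assms(1) bounded_any_center by blast
  have "infdist y T \<le> e" if "y \<in> S" for y
    using infdist_le[OF \<open>t \<in> T\<close>, of y] e[OF that] by (simp add: dist_commute)
  then have "bdd_above ((\<lambda>y. infdist y T) ` S)" by (rule bdd_aboveI2)
  then have "infdist x T \<le> (SUP y\<in>S. infdist y T)"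
    using assms(4) by (rule cSUP_upper2) simp
  then show ?thesis using assms by (auto simp: hausdist_def)
qed

lemma hausdist_close_point:
  fixes S T :: "'a::metric_space set"
  assumes "bounded S" "bounded T" "T \<noteq> {}" "x \<in> S" "hausdist S T < e"
  obtains y where "y \<in> T" "dist x y < e"
proof -
  have "infdist x T < e" using infdist_le_hausdist[OF assms(1-4)] assms(5) by linarith
  then show ?thesis using that assms(3)
    by (metis cINF_less_iff bdd_below_image_dist infdist_notempty)
qed

lemma mem_hausdist_limit:
  fixes L :: "'a::metric_space set"
  assumes P: "\<And>n. bounded (P n)" "\<And>n. p n \<in> P n"
    and L: "closed L" "bounded L" "L \<noteq> {}"
    and lim: "p \<longlonglongrightarrow> x" "(\<lambda>n. hausdist (P n) L) \<longlonglongrightarrow> 0"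
  shows "x \<in> L"
proof -
  have "(\<lambda>n. infdist (p n) L) \<longlonglongrightarrow> infdist x L"
    using lim(1) by (rule tendsto_infdist)
  moreover have "\<And>n. infdist (p n) L \<le> hausdist (P n) L"
    using infdist_le_hausdist P L by blast
  ultimately have "infdist x L \<le> 0"
    using LIMSEQ_le[OF _ lim(2)] by blast
  then have "infdist x L = 0" using infdist_nonneg[of x L] by linarith
  then show ?thesis using L in_closed_iff_infdist_zero by blast
qed

(* A compact Hausdorff limit of connected sets is connected: a splitting of L into
   two closed pieces at positive distance d would split some P n, which lies in the
   d/2-neighbourhood of L and meets the d/2-neighbourhood of both pieces. *)
lemma connected_hausdist_limit:
  fixes L :: "'a::metric_space set"
  assumes P: "\<And>n. bounded (P n)" "\<And>n. P n \<noteq> {}" "\<And>n. connected (P n)"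
    and L: "compact L" "L \<noteq> {}"
    and lim: "(\<lambda>n. hausdist (P n) L) \<longlonglongrightarrow> 0"
  shows "connected L"
proof (rule ccontr)
  assume "\<not> connected L"
  then obtain A B where AB: "closed A" "closed B" "A \<union> B = L" "A \<inter> B = {}" "A \<noteq> {}" "B \<noteq> {}"
    unfolding connected_closed_set[OF compact_imp_closed[OF L(1)]] by blast
  then have "compact A" using L(1) by (metis Un_upper1 compact_Int_closed inf.absorb_iff2)
  define d where "d = setdist A B"
  have d: "d > 0"
    unfolding d_def using setdist_gt_0_compact_closed[OF \<open>compact A\<close> AB(2)] AB(4-6) by blast
  obtain n where n: "hausdist (P n) L < d/2"
    using lim d by (metis half_gt_zero LIMSEQ_D diff_zero le_refl real_norm_def abs_less_iff)
  have bL: "bounded L" using L(1) by (rule compact_imp_bounded)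
  define U where "U = {x. infdist x A < d/2}"
  define V where "V = {x. infdist x B < d/2}"
  have "open U" "open V"
    unfolding U_def V_def by (intro open_Collect_less continuous_intros)+
  moreover have "U \<inter> V = {}"
  proof (rule ccontr)
    assume "U \<inter> V \<noteq> {}"
    then obtain x where "infdist x A < d/2" "infdist x B < d/2" unfolding U_def V_def by auto
    then obtain a b where "a \<in> A" "b \<in> B" "dist x a < d/2" "dist x b < d/2"
      using AB(5,6) by (metis cINF_less_iff bdd_below_image_dist infdist_notempty)
    moreover have "d \<le> dist a b"
      unfolding d_def using \<open>a \<in> A\<close> \<open>b \<in> B\<close> by (rule setdist_le_dist)
    ultimately show False
      by (metis dist_commute dist_triangle add_strict_mono field_sum_of_halves not_le order.trans)
  qed
  moreover have "P n \<subseteq> U \<union> V"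
  proof
    fix p assume "p \<in> P n"
    then obtain l where "l \<in> L" "dist p l < d/2"
      using hausdist_close_point[OF P(1) bL L(2) _ n] by blast
    then show "p \<in> U \<union> V"
      unfolding U_def V_def using AB(3) infdist_le[of l A p] infdist_le[of l B p] by fastforce
  qed
  moreover have "U \<inter> P n \<noteq> {}" "V \<inter> P n \<noteq> {}"
  proof -
    have near: "\<exists>p\<in>P n. infdist p C < d/2" if C: "C \<subseteq> L" "C \<noteq> {}" for C
    proof -
      obtain c where "c \<in> C" using C(2) by blast
      with C(1) obtain p where "p \<in> P n" "dist c p < d/2"
        using hausdist_close_point[OF bL P(1) P(2), of c n] n hausdist_sym by (metis subsetD)
      then show ?thesis using infdist_le[OF \<open>c \<in> C\<close>, of p] by (force simp: dist_commute)
    qed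
    show "U \<inter> P n \<noteq> {}" using near[of A] AB unfolding U_def by auto
    show "V \<inter> P n \<noteq> {}" using near[of B] AB unfolding V_def by auto
  qed
  ultimately show False using P(3)[of n] unfolding connected_def by blast
qed

(* Janiszewski's theorem in any two-dimensional Euclidean space, transported along a
   homeomorphism from the library version for the complex plane. *)
lemma Janiszewski_dual_plane:
  fixes S T :: "'a::euclidean_space set"
  assumes dim: "DIM('a) = 2"
    and ST: "compact S" "compact T" "connected S" "connected T" "connected (- (S \<union> T))"
  shows "connected (S \<inter> T)"
proof -
  have "(UNIV::'a set) homeomorphic (UNIV::complex set)"
    using dim by (simp add: homeomorphic_UNIV_UNIV)
  then obtain f :: "'a \<Rightarrow> complex" and g where hom: "homeomorphism UNIV UNIV f g"
    unfolding homeomorphic_def by blast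
  then have contf: "\<And>A. continuous_on A f" and contg: "\<And>A. continuous_on A g"
    and gf: "\<And>x. g (f x) = x" and "bij f"
    unfolding homeomorphism_def by (auto intro: continuous_on_subset) (metis bij_def injI)
  have "connected (f ` S \<inter> f ` T)"
  proof (rule Janiszewski_dual)
    show "compact (f ` S)" "compact (f ` T)"
      using ST(1,2) contf by (auto intro: compact_continuous_image)
    show "connected (f ` S)" "connected (f ` T)"
      using ST(3,4) contf by (auto intro: connected_continuous_image)
    have "- (f ` S \<union> f ` T) = f ` (- (S \<union> T))"
      using \<open>bij f\<close> by (simp only: bij_image_Compl_eq image_Un)
    then show "connected (- (f ` S \<union> f ` T))"
      using ST(5) contf by (metis connected_continuous_image)
  qed
  moreover have "g ` (f ` S \<inter> f ` T) = S \<inter> T"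
    using \<open>bij f\<close> gf by (simp add: image_Int[symmetric] bij_is_inj image_image)
  ultimately show ?thesis
    using contg connected_continuous_image by metis
qed

(* If a closed set K has disconnected complement, so does its frontier: the
   complement of frontier K is the disjoint union of the open sets interior K and
   - K, so a separation of - K extends by adding interior K to one side. *)
lemma disconnected_complement_frontier:
  fixes K :: "'a::topological_space set"
  assumes "closed K" "\<not> connected (- K)"
  shows "\<not> connected (- frontier K)"
proof
  assume conn: "connected (- frontier K)"
  obtain A B where AB: "open A" "open B" "- K \<subseteq> A \<union> B" "A \<inter> B \<inter> - K = {}"
    "A \<inter> - K \<noteq> {}" "B \<inter> - K \<noteq> {}"
    using assms(2) unfolding connected_def by blast
  have split: "- frontier K = interior K \<union> - K"
    using assms(1) interior_subset unfolding frontier_def by auto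
  have "open (A \<inter> - K)" "open (B \<inter> - K \<union> interior K)"
    using assms(1) AB(1,2) by auto
  moreover have "- frontier K \<subseteq> (A \<inter> - K) \<union> (B \<inter> - K \<union> interior K)"
    using split AB(3) by blast
  moreover have "(A \<inter> - K) \<inter> (B \<inter> - K \<union> interior K) \<inter> - frontier K = {}"
    using AB(4) interior_subset[of K] by blast
  moreover have "(A \<inter> - K) \<inter> - frontier K \<noteq> {}" "(B \<inter> - K \<union> interior K) \<inter> - frontier K \<noteq> {}"
    using split AB(5,6) by blast+
  ultimately show False
    using conn unfolding connected_def by blast
qed

theorem mainTheorem18:
  fixes \<alpha> \<beta> :: "nat \<Rightarrow> real \<Rightarrow> real^2"
    and L1 L2 :: "(real^2) set" and x0 x1 :: "real^2" and R :: real
  assumes arcs: "\<And>n. arc (\<alpha> n)" "\<And>n. arc (\<beta> n)"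
    and inball: "\<And>n. path_image (\<alpha> n) \<subseteq> ball 0 R" "\<And>n. path_image (\<beta> n) \<subseteq> ball 0 R"
    and disj: "\<And>n. path_image (\<alpha> n) \<inter> path_image (\<beta> n) = {}"
    and L: "compact L1" "L1 \<noteq> {}" "compact L2" "L2 \<noteq> {}"
    and hconv: "(\<lambda>n. hausdist (path_image (\<alpha> n)) L1) \<longlonglongrightarrow> 0"
               "(\<lambda>n. hausdist (path_image (\<beta> n)) L2) \<longlonglongrightarrow> 0"
    and start: "(\<lambda>n. pathstart (\<alpha> n)) \<longlonglongrightarrow> x0" "(\<lambda>n. pathstart (\<beta> n)) \<longlonglongrightarrow> x0"
    and finish: "(\<lambda>n. pathfinish (\<alpha> n)) \<longlonglongrightarrow> x1" "(\<lambda>n. pathfinish (\<beta> n)) \<longlonglongrightarrow> x1"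
    and neq: "x0 \<noteq> x1"
  shows "connected_component_set (L1 \<inter> L2) x0 = connected_component_set (L1 \<inter> L2) x1
         \<or> \<not> connected (- frontier (L1 \<union> L2))"
proof -
  have arc_image: "bounded (path_image \<gamma>)" "path_image \<gamma> \<noteq> {}" "connected (path_image \<gamma>)"
    if "arc \<gamma>" for \<gamma> :: "real \<Rightarrow> real^2"
    using arc_imp_path[OF that]
    by (auto intro: compact_imp_bounded compact_path_image connected_path_image)
  have L_closed: "closed L1" "bounded L1" "closed L2" "bounded L2"
    using L by (auto intro: compact_imp_closed compact_imp_bounded)
  have conn: "connected L1" "connected L2"
    using connected_hausdist_limit arc_image arcs L hconv by metis+
  have ends: "x0 \<in> L1 \<inter> L2" "x1 \<in> L1 \<inter> L2"
    using mem_hausdist_limit[OF _ _ L_closed(1,2) L(2)] mem_hausdist_limit[OF _ _ L_closed(3,4) L(4)]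
      arc_image arcs hconv start finish pathstart_in_path_image pathfinish_in_path_image
    by (metis IntI)+
  show ?thesis
  proof (cases "connected (L1 \<inter> L2)")
    case True
    then show ?thesis using ends connected_component_eq_self by metis
  next
    case False
    then have "\<not> connected (- (L1 \<union> L2))"
      using Janiszewski_dual_plane[of L1 L2] L conn by auto
    then show ?thesis
      using disconnected_complement_frontier L_closed by (metis closed_Un)
  qed
qed

end
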